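(* For every instance $(A,C,k)$, every committee $W$ that the Method of Equal Shares (MES) can output (under any tie-breaking), and every AV-completion $\overline{W}$ of $W$, the utilitarian ratio of $\overline{W}$ is at least $\frac{2}{\sqrt{k}}-\frac2k$.
   Context: An instance $(A,C,k)$ consists of a finite nonempty candidate set $C$, voters $N=\{1,\dots,n\}$, approval sets $A_i\subseteq C$, and a committee size $1\le k\le|C|$. $N_c=\{i: c\in A_i\}$. $\mathrm{sw}(W)=\sum_i|A_i\cap W|$; the utilitarian ratio of $W$ is $\mathrm{sw}(W)/\max\{\mathrm{sw}(W'):|W'|=k\}$. MES starts with $W=\emptyset$ and budgets $b_i=k/n$ for all $i\in N$. In each round, for each $c\in C\setminus W$ it determines the value $\rho\ge0$ (if any) with $\sum_{i\in N_c}\min(b_i,\rho)=1$; if no unselected candidate has such a $\rho$, MES terminates and outputs $W$; otherwise it adds a candidate $c$ with minimum $\rho$ (ties arbitrary) to $W$ and sets $b_i\leftarrow b_i-\min(b_i,\rho)$ for each $i\in N_c$. An AV-completion of $W$ is $W\cup T$ with $T\subseteq C\setminus W$, $|T|=k-|W|$, maximizing $\sum_{c\in T}|N_c|$. *)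

theory Defs
  imports Complex_Main
begin

definition voters :: "nat \<Rightarrow> nat set" where
  "voters n = {1..n}"

definition supporters :: "(nat \<Rightarrow> 'c set) \<Rightarrow> nat \<Rightarrow> 'c \<Rightarrow> nat set" where
  "supporters A n c = {i \<in> voters n. c \<in> A i}"

definition valid_instance :: "(nat \<Rightarrow> 'c set) \<Rightarrow> 'c set \<Rightarrow> nat \<Rightarrow> nat \<Rightarrow> bool" where
  "valid_instance A C k n \<longleftrightarrow> finite C \<and> C \<noteq> {} \<and> n \<ge> 1 \<and>
     (\<forall>i\<in>voters n. A i \<subseteq> C) \<and> 1 \<le> k \<and> k \<le> card C"

definition sw :: "(nat \<Rightarrow> 'c set) \<Rightarrow> nat \<Rightarrow> 'c set \<Rightarrow> nat" where
  "sw A n W = (\<Sum>i\<in>voters n. card (A i \<inter> W))"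

definition opt_sw :: "(nat \<Rightarrow> 'c set) \<Rightarrow> 'c set \<Rightarrow> nat \<Rightarrow> nat \<Rightarrow> nat" where
  "opt_sw A C k n = Max {sw A n W' | W'. W' \<subseteq> C \<and> card W' = k}"

definition util_ratio :: "(nat \<Rightarrow> 'c set) \<Rightarrow> 'c set \<Rightarrow> nat \<Rightarrow> nat \<Rightarrow> 'c set \<Rightarrow> real" where
  "util_ratio A C k n W = real (sw A n W) / real (opt_sw A C k n)"

definition affordable_at :: "(nat \<Rightarrow> 'c set) \<Rightarrow> nat \<Rightarrow> (nat \<Rightarrow> real) \<Rightarrow> 'c \<Rightarrow> real \<Rightarrow> bool" where
  "affordable_at A n b c \<rho> \<longleftrightarrow> \<rho> \<ge> 0 \<and> (\<Sum>i\<in>supporters A n c. min (b i) \<rho>) = 1"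

text \<open>Reachable MES states (committee, budgets), under arbitrary tie-breaking.\<close>
inductive mes_reach :: "(nat \<Rightarrow> 'c set) \<Rightarrow> 'c set \<Rightarrow> nat \<Rightarrow> nat \<Rightarrow> 'c set \<Rightarrow> (nat \<Rightarrow> real) \<Rightarrow> bool"
  for A C k n where
  init: "mes_reach A C k n {} (\<lambda>i. real k / real n)"
| step: "\<lbrakk> mes_reach A C k n W b; c \<in> C - W; affordable_at A n b c \<rho>;
           \<forall>c'\<in>C - W. \<forall>\<rho>'. affordable_at A n b c' \<rho>' \<longrightarrow> \<rho> \<le> \<rho>' \<rbrakk>
        \<Longrightarrow> mes_reach A C k n (insert c W)
              (\<lambda>i. if i \<in> supporters A n c then b i - min (b i) \<rho> else b i)"

definition mes_outcome :: "(nat \<Rightarrow> 'c set) \<Rightarrow> 'c set \<Rightarrow> nat \<Rightarrow> nat \<Rightarrow> 'c set \<Rightarrow> bool" where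
  "mes_outcome A C k n W \<longleftrightarrow>
     (\<exists>b. mes_reach A C k n W b \<and> (\<forall>c\<in>C - W. \<forall>\<rho>. \<not> affordable_at A n b c \<rho>))"

definition av_completion :: "(nat \<Rightarrow> 'c set) \<Rightarrow> 'c set \<Rightarrow> nat \<Rightarrow> nat \<Rightarrow> 'c set \<Rightarrow> 'c set \<Rightarrow> bool" where
  "av_completion A C k n W Wbar \<longleftrightarrow>
     (\<exists>T. T \<subseteq> C - W \<and> card T = k - card W \<and>
          (\<forall>T'. T' \<subseteq> C - W \<and> card T' = k - card W \<longrightarrow>
                (\<Sum>c\<in>T'. card (supporters A n c)) \<le> (\<Sum>c\<in>T. card (supporters A n c))) \<and>
          Wbar = W \<union> T)"

end

theory Submission
  imports Defs
begin

text \<open>Every candidate elected by MES has at least \<open>n / k\<close> supporters, since no budget ever exceeds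
  \<open>k / n\<close>. If an unelected candidate has \<open>x > n / k\<close> supporters, then more than \<open>x k / n - 1\<close>
  elected candidates have at least \<open>x\<close> supporters: otherwise each of its supporters would still
  hold \<open>1 / x\<close>, and MES could not have stopped. For \<open>x\<close> maximal outside \<open>W\<close>, these two facts bound
  the sum of \<open>min |N\<^sub>w| x\<close> over \<open>w \<in> W\<close> below by \<open>(2 / sqrt k - 2 / k) |W| x\<close> (an AM-GM step),
  and an exchange argument between an optimal committee, \<open>W\<close> and its AV-completion turns this
  into the ratio bound.\<close>

lemma finite_voters [simp]: "finite (voters n)"
  by (simp add: voters_def)

lemma supporters_subset_voters: "supporters A n c \<subseteq> voters n"
  by (auto simp: supporters_def)

lemma sw_eq_sum_card_supporters:
  assumes "finite X"
  shows "sw A n X = (\<Sum>c\<in>X. card (supporters A n c))"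
proof -
  have "sw A n X = (\<Sum>i\<in>voters n. \<Sum>c\<in>X. of_bool (c \<in> A i))"
    unfolding sw_def using assms by (intro sum.cong) (simp_all add: Int_commute Int_def)
  also have "\<dots> = (\<Sum>c\<in>X. \<Sum>i\<in>voters n. of_bool (c \<in> A i))"
    by (rule sum.swap)
  also have "\<dots> = (\<Sum>c\<in>X. card (supporters A n c))"
    by (simp add: supporters_def Int_def)
  finally show ?thesis .
qed

lemma opt_sw_attained:
  assumes "finite C" "k \<le> card C"
  obtains Ws where "Ws \<subseteq> C" "card Ws = k" "opt_sw A C k n = sw A n Ws"
proof -
  let ?S = "{sw A n W' | W'. W' \<subseteq> C \<and> card W' = k}"
  have "finite {W'. W' \<subseteq> C \<and> card W' = k}"
    using assms(1) by simp
  then have finite_S: "finite ?S"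
    by (rule finite_image_set)
  obtain W' where "W' \<subseteq> C" "card W' = k"
    using obtain_subset_with_card_n[OF assms(2)] by metis
  then have "?S \<noteq> {}"
    by blast
  with finite_S have "opt_sw A C k n \<in> ?S"
    unfolding opt_sw_def by (rule Max_in)
  then show ?thesis
    using that by blast
qed

definition mes_av_ratio :: "nat \<Rightarrow> real" where
  "mes_av_ratio k = 2 / sqrt (real k) - 2 / real k"

lemma mes_av_ratio_sqrt:
  assumes "1 \<le> k"
  shows "mes_av_ratio k = 2 * (sqrt (real k) - 1) / real k"
  using assms by (simp add: mes_av_ratio_def field_simps)

lemma mes_av_ratio_nonneg: "1 \<le> k \<Longrightarrow> 0 \<le> mes_av_ratio k"
  by (simp add: mes_av_ratio_sqrt)

lemma mes_av_ratio_le_one: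
  assumes "1 \<le> k"
  shows "mes_av_ratio k \<le> 1"
proof -
  have "2 * (sqrt (real k) - 1) \<le> real k"
    using sum_squares_ge_zero[of "sqrt (real k) - 1" 0] by (simp add: algebra_simps power2_eq_square)
  then show ?thesis
    using assms by (simp add: mes_av_ratio_sqrt)
qed

text \<open>With \<open>\<alpha> = mes_av_ratio k\<close>, \<open>y = x / u\<close> and \<open>r = sqrt k\<close>, the claim reduces to
  \<open>\<alpha> m y \<le> m + (y - 1)\<^sup>2\<close>, and \<open>k (\<alpha> y - 1) = 2 (r - 1) y - r\<^sup>2 \<le> (y - 1)\<^sup>2\<close> is \<open>(y - r)\<^sup>2 \<ge> 0\<close>.\<close>
lemma mes_av_ratio_mult_le:
  fixes m h u x :: real
  assumes "1 \<le> k" "0 \<le> m" "m \<le> real k" "0 < u" "u < x" "x / u - 1 \<le> h"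
  shows "mes_av_ratio k * m * x \<le> m * u + h * (x - u)"
proof -
  define y where "y = x / u"
  define r where "r = sqrt (real k)"
  define \<alpha> where "\<alpha> = mes_av_ratio k"
  have x_eq: "x = y * u"
    using assms(4) by (simp add: y_def)
  have r_sq: "r * r = real k"
    by (simp add: r_def)
  have \<alpha>k: "\<alpha> * real k = 2 * r - 2"
    using assms(1) by (simp add: \<alpha>_def r_def mes_av_ratio_sqrt)
  have "\<alpha> * m * y \<le> m + (y - 1) * (y - 1)"
  proof (cases "\<alpha> * y \<le> 1")
    case True
    then have "\<alpha> * m * y \<le> m"
      using mult_left_mono[OF True assms(2)] by (simp add: algebra_simps)
    moreover have "0 \<le> (y - 1) * (y - 1)"
      by simp
    ultimately show ?thesis
      by linarith
  next
    case False
    have "m * (\<alpha> * y - 1) \<le> real k * (\<alpha> * y - 1)"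
      using False assms(3) by (intro mult_right_mono) auto
    also have "\<dots> = (\<alpha> * real k) * y - r * r"
      using r_sq by (simp add: algebra_simps)
    also have "\<dots> = (2 * r - 2) * y - r * r"
      by (simp only: \<alpha>k)
    finally show ?thesis
      using zero_le_square[of "y - r"] by (simp add: algebra_simps power2_eq_square)
  qed
  then have "\<alpha> * m * x \<le> u * (m + (y - 1) * (y - 1))"
    using assms(4) unfolding x_eq by (simp add: mult_left_mono mult.commute mult.left_commute)
  also have "\<dots> \<le> m * u + h * (x - u)"
  proof -
    have "(y - 1) * (x - u) \<le> h * (x - u)"
      using assms(5,6) by (intro mult_right_mono) (auto simp: y_def)
    then show ?thesis
      unfolding x_eq by (simp add: algebra_simps)
  qed
  finally show ?thesis
    unfolding \<alpha>_def .
qed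

lemma mes_av_ratio_le_sum_min:
  fixes s :: "'c \<Rightarrow> real"
  assumes "finite W" "card W \<le> k" "1 \<le> k" "0 < u" "0 \<le> x"
    and ge_u: "\<And>w. w \<in> W \<Longrightarrow> u \<le> s w"
    and many_ge_x: "u < x \<Longrightarrow> x / u - 1 \<le> real (card {w\<in>W. x \<le> s w})"
  shows "mes_av_ratio k * card W * x \<le> (\<Sum>w\<in>W. min (s w) x)"
proof (cases "x \<le> u")
  case True
  then have "(\<Sum>w\<in>W. min (s w) x) = card W * x"
    using ge_u by (simp add: min_absorb2 order_trans)
  moreover have "0 \<le> real (card W) * x"
    using assms(5) by simp
  ultimately show ?thesis
    using mult_left_le_one_le[OF _ mes_av_ratio_nonneg mes_av_ratio_le_one] assms(3)
    by (simp add: mult.assoc)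
next
  case False
  define H where "H = {w\<in>W. x \<le> s w}"
  have H: "H \<subseteq> W" "finite H"
    using assms(1) by (auto simp: H_def)
  have "mes_av_ratio k * card W * x \<le> card W * u + card H * (x - u)"
    using assms(2-4) False many_ge_x unfolding H_def
    by (intro mes_av_ratio_mult_le) auto
  also have "\<dots> = card H * x + card (W - H) * u"
    using H card_mono[OF assms(1) H(1)] by (simp add: card_Diff_subset of_nat_diff algebra_simps)
  also have "\<dots> = (\<Sum>w\<in>W. if w \<in> H then x else u)"
    using H assms(1) by (simp add: sum.If_cases Int_absorb1 Diff_eq)
  also have "\<dots> \<le> (\<Sum>w\<in>W. min (s w) x)"
    using ge_u False by (intro sum_mono) (auto simp: H_def)
  finally show ?thesis .
qed

lemma sum_le_max_subset_plus:
  fixes s :: "'c \<Rightarrow> real"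
  assumes "finite D" "card D = card T + m"
    and T_max: "\<And>U. U \<subseteq> D \<Longrightarrow> card U = card T \<Longrightarrow> sum s U \<le> sum s T"
    and le_M: "\<And>c. c \<in> D \<Longrightarrow> s c \<le> M"
  shows "sum s D \<le> sum s T + m * M"
proof -
  obtain U where U: "U \<subseteq> D" "card U = card T"
    using obtain_subset_with_card_n[of "card T" D] assms(2) by auto
  have "card (D - U) = m"
    using U assms(1,2) by (simp add: card_Diff_subset finite_subset)
  then have "sum s (D - U) \<le> m * M"
    using sum_bounded_above[of "D - U" s M] le_M by auto
  moreover have "sum s D = sum s U + sum s (D - U)"
    using U(1) assms(1) by (simp add: sum.subset_diff)
  ultimately show ?thesis
    using T_max[OF U] by linarith
qed

lemma scaled_sum_subset_le:
  fixes s :: "'c \<Rightarrow> real" and \<alpha> M :: real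
  assumes "finite W" "Q \<subseteq> W" "0 \<le> \<alpha>" "\<alpha> \<le> 1"
    and min_sum: "\<alpha> * card W * M \<le> (\<Sum>w\<in>W. min (s w) M)"
  shows "\<alpha> * (sum s Q + card (W - Q) * M) \<le> sum s W"
proof -
  have "finite Q"
    using assms(1,2) finite_subset by blast
  have card_W: "real (card W) = real (card Q) + real (card (W - Q))"
    using card_Diff_subset[OF \<open>finite Q\<close> assms(2)] card_mono[OF assms(1,2)] by simp
  have "\<alpha> * (sum s Q + card (W - Q) * M)
      = \<alpha> * (\<Sum>w\<in>Q. s w - min (s w) M) + \<alpha> * card W * M - \<alpha> * (\<Sum>w\<in>Q. M - min (s w) M)"
    by (simp add: card_W sum_subtractf algebra_simps)
  also have "\<dots> \<le> (\<Sum>w\<in>Q. s w - min (s w) M) + \<alpha> * card W * M"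
  proof -
    have "\<alpha> * (\<Sum>w\<in>Q. s w - min (s w) M) \<le> (\<Sum>w\<in>Q. s w - min (s w) M)"
      using assms(3,4) by (intro mult_left_le_one_le sum_nonneg) auto
    moreover have "0 \<le> \<alpha> * (\<Sum>w\<in>Q. M - min (s w) M)"
      using assms(3) by (intro mult_nonneg_nonneg sum_nonneg) auto
    ultimately show ?thesis
      by linarith
  qed
  also have "\<dots> \<le> (\<Sum>w\<in>W. s w - min (s w) M) + (\<Sum>w\<in>W. min (s w) M)"
    using min_sum assms(1,2) by (intro add_mono sum_mono2) auto
  also have "\<dots> = sum s W"
    by (simp add: sum_subtractf)
  finally show ?thesis .
qed

text \<open>Let \<open>M\<close> bound the scores outside \<open>W\<close>. The part of \<open>Ws\<close> outside \<open>W\<close> is worth at most \<open>T\<close>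
  plus \<open>|W - Ws|\<close> candidates of score \<open>\<le> M\<close>, and the hypothesis on \<open>min (s w) M\<close> lets \<open>W\<close> pay
  for these together with \<open>\<alpha>\<close> times the part of \<open>Ws\<close> inside \<open>W\<close>.\<close>
lemma scaled_sum_le_completion:
  fixes s :: "'c \<Rightarrow> real" and \<alpha> :: real
  assumes "finite C" "W \<subseteq> C" "T \<subseteq> C - W" "Ws \<subseteq> C" "card Ws = card W + card T"
    and T_max: "\<And>U. U \<subseteq> C - W \<Longrightarrow> card U = card T \<Longrightarrow> sum s U \<le> sum s T"
    and s_nonneg: "\<And>c. c \<in> C \<Longrightarrow> 0 \<le> s c"
    and "0 \<le> \<alpha>" "\<alpha> \<le> 1"
    and outside: "\<And>c. c \<in> C - W \<Longrightarrow> \<alpha> * card W * s c \<le> (\<Sum>w\<in>W. min (s w) (s c))"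
  shows "\<alpha> * sum s Ws \<le> sum s W + sum s T"
proof -
  have fin: "finite W" "finite Ws"
    using assms(1,2,4) finite_subset by blast+
  obtain M where M_ge: "\<And>c. c \<in> C - W \<Longrightarrow> s c \<le> M"
    and M_sum: "\<alpha> * card W * M \<le> (\<Sum>w\<in>W. min (s w) M)"
  proof (cases "C - W = {}")
    case True
    have "(\<Sum>w\<in>W. min (s w) 0) = 0"
      using assms(2) s_nonneg by (intro sum.neutral) (auto simp: min_absorb2)
    then show ?thesis
      using that[of 0] True by simp
  next
    case False
    then have "Max (s ` (C - W)) \<in> s ` (C - W)"
      using assms(1) by (intro Max_in) auto
    then show ?thesis
      using that[of "Max (s ` (C - W))"] outside assms(1) by auto
  qed
  have "card (Ws - W) = card T + card (W - Ws)"
    using card_Int_Diff[OF fin(2), of W] card_Int_Diff[OF fin(1), of Ws] assms(5)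
    by (simp add: Int_commute)
  then have outer: "sum s (Ws - W) \<le> sum s T + card (W - Ws) * M"
    using fin(2) assms(4) by (intro sum_le_max_subset_plus T_max M_ge) auto
  have "W - Ws \<inter> W = W - Ws"
    by blast
  then have inner: "\<alpha> * (sum s (Ws \<inter> W) + card (W - Ws) * M) \<le> sum s W"
    using scaled_sum_subset_le[OF fin(1) _ assms(8,9) M_sum, of "Ws \<inter> W"] by simp
  have "0 \<le> sum s T"
    using assms(3) s_nonneg by (intro sum_nonneg) auto
  then have "\<alpha> * sum s T \<le> sum s T"
    using assms(8,9) by (rule mult_left_le_one_le)
  moreover have "\<alpha> * sum s Ws = \<alpha> * sum s (Ws \<inter> W) + \<alpha> * sum s (Ws - W)"
    using sum.Int_Diff[OF fin(2), of s W] by (simp add: algebra_simps)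
  ultimately show ?thesis
    using mult_left_mono[OF outer assms(8)] inner by (simp add: algebra_simps)
qed

lemma sum_budget_update:
  fixes b :: "nat \<Rightarrow> real"
  shows "(\<Sum>i\<in>voters n. if i \<in> supporters A n c then b i - min (b i) \<rho> else b i)
       = (\<Sum>i\<in>voters n. b i) - (\<Sum>i\<in>supporters A n c. min (b i) \<rho>)"
proof -
  have "(\<Sum>i\<in>voters n. if i \<in> supporters A n c then b i - min (b i) \<rho> else b i)
      = (\<Sum>i\<in>voters n. b i) - (\<Sum>i\<in>voters n. if i \<in> supporters A n c then min (b i) \<rho> else 0)"
    by (simp add: sum_subtractf[symmetric] if_distrib cong: if_cong)
  also have "(\<Sum>i\<in>voters n. if i \<in> supporters A n c then min (b i) \<rho> else 0)
      = (\<Sum>i\<in>supporters A n c. min (b i) \<rho>)"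
    using supporters_subset_voters[of A n c]
    by (simp add: sum.inter_restrict[symmetric] Int_absorb1)
  finally show ?thesis .
qed

lemma affordable_at_nonneg: "affordable_at A n b c \<rho> \<Longrightarrow> 0 \<le> \<rho>"
  by (simp add: affordable_at_def)

lemma one_le_card_supporters_mult_price:
  assumes "affordable_at A n b c \<rho>"
  shows "1 \<le> real (card (supporters A n c)) * \<rho>"
proof -
  have "1 = (\<Sum>i\<in>supporters A n c. min (b i) \<rho>)"
    using assms by (simp add: affordable_at_def)
  also have "\<dots> \<le> (\<Sum>i\<in>supporters A n c. \<rho>)"
    by (intro sum_mono) simp
  finally show ?thesis
    by simp
qed

lemma card_supporters_ge_if_price_le:
  assumes "affordable_at A n b c \<rho>" "\<rho> \<le> 1 / real x" "0 < x"
  shows "x \<le> card (supporters A n c)"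
proof -
  have "1 \<le> real (card (supporters A n c)) * \<rho>"
    using assms(1) by (rule one_le_card_supporters_mult_price)
  also have "\<dots> \<le> real (card (supporters A n c)) * (1 / real x)"
    using assms(2) by (rule mult_left_mono) simp
  finally show ?thesis
    using assms(3) by (simp add: field_simps)
qed

lemma least_price_le_budget_bound:
  fixes b :: "nat \<Rightarrow> real"
  assumes "affordable_at A n b c \<rho>" "\<And>i. b i \<le> \<beta>" "0 \<le> \<beta>"
    and least: "\<And>\<rho>'. affordable_at A n b c \<rho>' \<Longrightarrow> \<rho> \<le> \<rho>'"
  shows "\<rho> \<le> \<beta>"
proof (rule ccontr)
  assume "\<not> \<rho> \<le> \<beta>"
  then have "min (b i) \<beta> = min (b i) \<rho>" for i
    using assms(2)[of i] by linarith
  then have "affordable_at A n b c \<beta>"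
    using assms(1,3) by (simp add: affordable_at_def)
  with least \<open>\<not> \<rho> \<le> \<beta>\<close> show False
    by fastforce
qed

lemma affordable_at_inverse_card:
  fixes b :: "nat \<Rightarrow> real"
  assumes "card (supporters A n c) = x" "1 \<le> x" "\<And>i. i \<in> supporters A n c \<Longrightarrow> 1 / real x \<le> b i"
  shows "affordable_at A n b c (1 / real x)"
proof -
  have "(\<Sum>i\<in>supporters A n c. min (b i) (1 / real x)) = (\<Sum>i\<in>supporters A n c. 1 / real x)"
    using assms(3) by (intro sum.cong) auto
  then show ?thesis
    using assms(1,2) by (simp add: affordable_at_def)
qed

lemma mes_reach_finite: "mes_reach A C k n W b \<Longrightarrow> finite W"
  by (induction rule: mes_reach.induct) auto

lemma mes_reach_subset: "mes_reach A C k n W b \<Longrightarrow> W \<subseteq> C"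
  by (induction rule: mes_reach.induct) auto

lemma mes_reach_budget_bounds:
  "mes_reach A C k n W b \<Longrightarrow> 0 \<le> b i \<and> b i \<le> real k / real n"
  by (induction rule: mes_reach.induct) (auto simp: min_def dest: affordable_at_nonneg)

lemma mes_reach_budget_sum:
  assumes "mes_reach A C k n W b" "1 \<le> n"
  shows "(\<Sum>i\<in>voters n. b i) = real k - real (card W)"
  using assms
proof (induction rule: mes_reach.induct)
  case init
  then show ?case
    by (simp add: voters_def)
next
  case (step W b c \<rho>)
  then have "finite W" "c \<notin> W" "(\<Sum>i\<in>supporters A n c. min (b i) \<rho>) = 1"
    by (auto simp: affordable_at_def dest: mes_reach_finite)
  with step show ?case
    by (simp add: sum_budget_update)
qed

lemma mes_reach_card_le:
  assumes "mes_reach A C k n W b" "1 \<le> n"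
  shows "card W \<le> k"
proof -
  have "0 \<le> (\<Sum>i\<in>voters n. b i)"
    using mes_reach_budget_bounds[OF assms(1)] by (intro sum_nonneg) auto
  then show ?thesis
    using mes_reach_budget_sum[OF assms] by simp
qed

lemma mes_reach_card_supporters:
  assumes "mes_reach A C k n W b" "w \<in> W"
  shows "1 \<le> real (card (supporters A n w)) * (real k / real n)"
  using assms
proof (induction rule: mes_reach.induct)
  case init
  then show ?case
    by simp
next
  case (step W b c \<rho>)
  have "\<rho> \<le> real k / real n"
  proof (rule least_price_le_budget_bound[OF step.hyps(3)])
    show "b i \<le> real k / real n" for i
      using mes_reach_budget_bounds[OF step.hyps(1)] by blast
    show "0 \<le> real k / real n"
      by simp
    show "\<rho> \<le> \<rho>'" if "affordable_at A n b c \<rho>'" for \<rho>'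
      using step.hyps(2,4) that by blast
  qed
  then have "real (card (supporters A n c)) * \<rho> \<le> real (card (supporters A n c)) * (real k / real n)"
    by (rule mult_left_mono) simp
  then have "1 \<le> real (card (supporters A n c)) * (real k / real n)"
    using one_le_card_supporters_mult_price[OF step.hyps(3)] by linarith
  then show ?case
    using step.IH step.prems by auto
qed

definition well_supported :: "(nat \<Rightarrow> 'c set) \<Rightarrow> nat \<Rightarrow> nat \<Rightarrow> 'c set \<Rightarrow> 'c set" where
  "well_supported A n x W = {w\<in>W. x \<le> card (supporters A n w)}"

lemma inverse_le_of_spent_le:
  fixes h x \<beta> b :: real
  assumes "0 < x" "h + 1 \<le> x * \<beta>" "\<beta> - b \<le> h / x"
  shows "1 / x \<le> b"
proof -
  have "h / x + 1 / x \<le> \<beta>"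
    using assms(1,2) by (simp add: field_simps)
  with assms(3) show ?thesis
    by linarith
qed

text \<open>Fix an unelected \<open>c\<close> with \<open>x\<close> supporters. As long as fewer than \<open>x k / n - 1\<close> elected
  candidates have \<open>x\<close> or more supporters, every supporter of \<open>c\<close> keeps at least \<open>1 / x\<close>, so
  \<open>c\<close> is affordable at price \<open>1 / x\<close>. Hence the next candidate costs at most \<open>1 / x\<close> per voter,
  and therefore has at least \<open>x\<close> supporters.\<close>
lemma mes_reach_spent_le:
  assumes "mes_reach A C k n W b" "c \<in> C - W" "card (supporters A n c) = x" "1 \<le> x"
    and "real (card (well_supported A n x W)) + 1 \<le> real x * (real k / real n)"
    and "i \<in> supporters A n c"
  shows "real k / real n - b i \<le> real (card (well_supported A n x W)) / real x"
  using assms(1,2,5,6)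
proof (induction arbitrary: i rule: mes_reach.induct)
  case init
  then show ?case
    by simp
next
  case (step W b c' \<rho>)
  let ?h = "card (well_supported A n x W)"
  let ?h' = "card (well_supported A n x (insert c' W))"
  have "finite W" "c' \<notin> W"
    using step.hyps(1,2) mes_reach_finite by auto
  have x_pos: "0 < real x"
    using assms(4) by simp
  have "?h \<le> ?h'"
    using \<open>finite W\<close> by (intro card_mono) (auto simp: well_supported_def)
  have c: "c \<in> C - W"
    using step.prems(1) by blast
  have spent: "real k / real n - b j \<le> ?h / real x" if "j \<in> supporters A n c" for j
    using step.IH[OF c _ that] step.prems(2) \<open>?h \<le> ?h'\<close> by linarith
  have "affordable_at A n b c (1 / real x)"
    using assms(3,4) step.prems(2) \<open>?h \<le> ?h'\<close> spent x_pos
    by (intro affordable_at_inverse_card inverse_le_of_spent_le[of "real x" "real ?h"]) auto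
  then have \<rho>_le: "\<rho> \<le> 1 / real x"
    using step.hyps(4) c by blast
  then have "x \<le> card (supporters A n c')"
    using card_supporters_ge_if_price_le[OF step.hyps(3)] assms(4) by simp
  then have "well_supported A n x (insert c' W) = insert c' (well_supported A n x W)"
    by (auto simp: well_supported_def)
  then have h': "?h' = ?h + 1"
    using \<open>finite W\<close> \<open>c' \<notin> W\<close> by (simp add: well_supported_def)
  have "real k / real n - (if i \<in> supporters A n c' then b i - min (b i) \<rho> else b i)
      \<le> real k / real n - b i + 1 / real x"
    using \<rho>_le x_pos by (auto simp: min_def)
  also have "\<dots> \<le> ?h' / real x"
    using spent[OF step.prems(3)] x_pos by (simp add: h' add_divide_distrib)
  finally show ?case .
qed

lemma mes_terminal_card_well_supported:
  assumes "mes_reach A C k n W b" "c \<in> C - W" "\<forall>\<rho>. \<not> affordable_at A n b c \<rho>"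
    and "card (supporters A n c) = x" "1 \<le> x"
  shows "real x * (real k / real n) < real (card (well_supported A n x W)) + 1"
proof (rule ccontr)
  assume "\<not> ?thesis"
  then have "affordable_at A n b c (1 / real x)"
    using mes_reach_spent_le[OF assms(1,2,4,5)] assms(5)
    by (intro affordable_at_inverse_card[OF assms(4,5)] inverse_le_of_spent_le) auto
  with assms(3) show False
    by blast
qed

lemma mes_terminal_sum_min_ge:
  assumes "1 \<le> n" "1 \<le> k" "mes_reach A C k n W b"
    and terminal: "\<forall>c\<in>C - W. \<forall>\<rho>. \<not> affordable_at A n b c \<rho>" and "c \<in> C - W"
  shows "mes_av_ratio k * card W * real (card (supporters A n c))
    \<le> (\<Sum>w\<in>W. min (real (card (supporters A n w))) (real (card (supporters A n c))))"
proof (rule mes_av_ratio_le_sum_min)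
  show "finite W" "card W \<le> k"
    using assms(1,3) mes_reach_finite mes_reach_card_le by blast+
  show "0 < real n / real k"
    using assms(1,2) by simp
  show "real n / real k \<le> real (card (supporters A n w))" if "w \<in> W" for w
    using mes_reach_card_supporters[OF assms(3) that] assms(1,2) by (simp add: field_simps)
  let ?x = "card (supporters A n c)"
  assume "real n / real k < real ?x"
  then have "0 < real ?x"
    using divide_nonneg_nonneg[of "real n" "real k"] by linarith
  then have "1 \<le> ?x"
    by simp
  then show "real ?x / (real n / real k) - 1 \<le> real (card {w\<in>W. real ?x \<le> real (card (supporters A n w))})"
    using mes_terminal_card_well_supported[OF assms(3,5)] terminal assms(5)
    by (simp add: well_supported_def field_simps)
qed (use assms(2) in simp_all)

theorem theorem4:
  fixes A :: "nat \<Rightarrow> 'c set" and C :: "'c set" and k n :: nat and W Wbar :: "'c set"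
  assumes "valid_instance A C k n"
    and "mes_outcome A C k n W"
    and "av_completion A C k n W Wbar"
  shows "real (sw A n Wbar) \<ge> (2 / sqrt (real k) - 2 / real k) * real (opt_sw A C k n)"
proof -
  define s where "s c = real (card (supporters A n c))" for c
  have C: "finite C" "1 \<le> n" "1 \<le> k" "k \<le> card C"
    using assms(1) by (auto simp: valid_instance_def)
  obtain b where reach: "mes_reach A C k n W b"
    and terminal: "\<forall>c\<in>C - W. \<forall>\<rho>. \<not> affordable_at A n b c \<rho>"
    using assms(2) by (auto simp: mes_outcome_def)
  obtain T where T: "T \<subseteq> C - W" "card T = k - card W" "Wbar = W \<union> T"
    and T_max: "\<And>U. U \<subseteq> C - W \<Longrightarrow> card U = k - card W \<Longrightarrow>
                   (\<Sum>c\<in>U. card (supporters A n c)) \<le> (\<Sum>c\<in>T. card (supporters A n c))"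
    using assms(3) by (auto simp: av_completion_def)
  obtain Ws where Ws: "Ws \<subseteq> C" "card Ws = k" "opt_sw A C k n = sw A n Ws"
    using opt_sw_attained[OF C(1,4)] by blast
  have "W \<subseteq> C" "card W \<le> k"
    using reach C(2) by (auto dest: mes_reach_subset mes_reach_card_le)
  have sw_eq: "real (sw A n X) = sum s X" if "X \<subseteq> C" for X
    using finite_subset[OF that C(1)] by (simp add: sw_eq_sum_card_supporters s_def)
  have "(2 / sqrt (real k) - 2 / real k) * real (opt_sw A C k n) = mes_av_ratio k * sum s Ws"
    using Ws(1,3) sw_eq by (simp add: mes_av_ratio_def)
  also have "\<dots> \<le> sum s W + sum s T"
    using C T Ws(1,2) T_max \<open>W \<subseteq> C\<close> \<open>card W \<le> k\<close>
      mes_terminal_sum_min_ge[OF C(2,3) reach terminal] mes_av_ratio_nonneg mes_av_ratio_le_one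
    by (intro scaled_sum_le_completion[where C = C]) (auto simp: s_def simp flip: of_nat_sum)
  also have "\<dots> = sum s Wbar"
    unfolding T(3) using T(1) \<open>W \<subseteq> C\<close> C(1)
    by (intro sum.union_disjoint[symmetric]) (auto intro: finite_subset)
  also have "\<dots> = real (sw A n Wbar)"
    using T(1,3) \<open>W \<subseteq> C\<close> by (intro sw_eq[symmetric]) blast
  finally show ?thesis .
qed

end
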